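(* Let $U$ be a nonempty finite set and let $R\subseteq U\times U$ be a serial and transitive relation. Then $(Reg(U,R),\subseteq)$ is a semimodular lattice; that is, it is a lattice and for all $X,Y\in Reg(U,R)$, if $Y$ covers $X\wedge Y$ then $X\vee Y$ covers $X$.
   Context: For $x\in U$, the successor neighborhood is $R_s(x)=\{y\in U\mid xRy\}$. $R$ is serial if for every $x\in U$ there is $y\in U$ with $xRy$; $R$ is transitive if $xRy$ and $yRz$ imply $xRz$. For $X\subseteq U$, the lower and upper approximations are $\underline{R}(X)=\{x\in U\mid R_s(x)\subseteq X\}$ and $\overline{R}(X)=\{x\in U\mid R_s(x)\cap X\neq\emptyset\}$. A set $X\subseteq U$ is a regular set if $X=\underline{R}(\overline{R}(X))$; $Reg(U,R)$ denotes the collection of all regular sets, ordered by inclusion. In a poset, $b$ covers $a$ if $a<b$ and there is no $c$ with $a<c<b$. *)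

theory Defs
  imports Main
begin

definition succ_nbhd :: "'a set \<Rightarrow> ('a \<times> 'a) set \<Rightarrow> 'a \<Rightarrow> 'a set" where
  "succ_nbhd U R x = {y \<in> U. (x, y) \<in> R}"

definition lower_approx :: "'a set \<Rightarrow> ('a \<times> 'a) set \<Rightarrow> 'a set \<Rightarrow> 'a set" where
  "lower_approx U R X = {x \<in> U. succ_nbhd U R x \<subseteq> X}"

definition upper_approx :: "'a set \<Rightarrow> ('a \<times> 'a) set \<Rightarrow> 'a set \<Rightarrow> 'a set" where
  "upper_approx U R X = {x \<in> U. succ_nbhd U R x \<inter> X \<noteq> {}}"

definition serial_on :: "'a set \<Rightarrow> ('a \<times> 'a) set \<Rightarrow> bool" where
  "serial_on U R \<longleftrightarrow> (\<forall>x\<in>U. \<exists>y\<in>U. (x, y) \<in> R)"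

definition Reg :: "'a set \<Rightarrow> ('a \<times> 'a) set \<Rightarrow> 'a set set" where
  "Reg U R = {X. X \<subseteq> U \<and> X = lower_approx U R (upper_approx U R X)}"

definition is_meet_in :: "'a set set \<Rightarrow> 'a set \<Rightarrow> 'a set \<Rightarrow> 'a set \<Rightarrow> bool" where
  "is_meet_in S a b m \<longleftrightarrow> m \<in> S \<and> m \<subseteq> a \<and> m \<subseteq> b \<and>
     (\<forall>z\<in>S. z \<subseteq> a \<and> z \<subseteq> b \<longrightarrow> z \<subseteq> m)"

definition is_join_in :: "'a set set \<Rightarrow> 'a set \<Rightarrow> 'a set \<Rightarrow> 'a set \<Rightarrow> bool" where
  "is_join_in S a b j \<longleftrightarrow> j \<in> S \<and> a \<subseteq> j \<and> b \<subseteq> j \<and>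
     (\<forall>z\<in>S. a \<subseteq> z \<and> b \<subseteq> z \<longrightarrow> j \<subseteq> z)"

definition covers_in :: "'a set set \<Rightarrow> 'a set \<Rightarrow> 'a set \<Rightarrow> bool" where
  "covers_in S a b \<longleftrightarrow> a \<in> S \<and> b \<in> S \<and> a \<subset> b \<and> \<not> (\<exists>c\<in>S. a \<subset> c \<and> c \<subset> b)"

end

theory Submission
  imports Defs
begin

text \<open>
  Call a point z \<^emph>\<open>terminal\<close> if every successor of z leads back to z,
  i.e. z lies in a final strongly connected cluster of R.  For a serial, transitive
  relation on a finite set every point reaches a terminal point (choose a successor
  whose successor neighbourhood is of minimal size).  Consequently a regular set X is
  determined by its trace X \<inter> T on the terminal points T:
  X = reg_of X, where reg_of A is the set of points all of whose terminal successors
  lie in A; conversely reg_of A is regular whenever A is closed under R on T.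
  Hence regular sets are compared by their traces, the meet of X and Y is X \<inter> Y,
  and their join is reg_of (X \<union> Y), whose trace is (X \<union> Y) \<inter> T.  Semimodularity then
  follows because traces behave like a lattice of sets: an element strictly between X
  and the join would produce, after intersecting with Y, an element strictly between
  X \<inter> Y and Y.
\<close>

lemma is_meet_in_unique:
  assumes "is_meet_in S a b m" and "is_meet_in S a b m'"
  shows "m = m'"
  using assms unfolding is_meet_in_def by (meson subset_antisym)

lemma is_join_in_unique:
  assumes "is_join_in S a b j" and "is_join_in S a b j'"
  shows "j = j'"
  using assms unfolding is_join_in_def by (meson subset_antisym)

lemma mem_lower_upper_iff:
  assumes "R \<subseteq> U \<times> U"
  shows "x \<in> lower_approx U R (upper_approx U R A) \<longleftrightarrow>
         x \<in> U \<and> (\<forall>y. (x, y) \<in> R \<longrightarrow> (\<exists>w. (y, w) \<in> R \<and> w \<in> A))"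
  using assms unfolding lower_approx_def upper_approx_def succ_nbhd_def by fastforce

locale serial_transitive =
  fixes U :: "'a set" and R :: "('a \<times> 'a) set"
  assumes finite_U: "finite U" and R_sub: "R \<subseteq> U \<times> U"
    and serial: "serial_on U R" and transitive: "trans R"
begin

lemma R_trans: "(a, b) \<in> R \<Longrightarrow> (b, c) \<in> R \<Longrightarrow> (a, c) \<in> R"
  using transitive by (meson transD)

definition terminal :: "'a set" where
  "terminal = {z \<in> U. \<forall>w. (z, w) \<in> R \<longrightarrow> (w, z) \<in> R}"

definition reg_of :: "'a set \<Rightarrow> 'a set" where
  "reg_of A = {x \<in> U. \<forall>z\<in>terminal. (x, z) \<in> R \<longrightarrow> z \<in> A}"

definition terminal_closed :: "'a set \<Rightarrow> bool" where
  "terminal_closed A \<longleftrightarrow> (\<forall>z\<in>terminal \<inter> A. \<forall>w. (z, w) \<in> R \<longrightarrow> w \<in> A)"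

text \<open>The key consequence of finiteness: a successor y of x with a successor
  neighbourhood of minimal size has the same neighbourhood as all its successors,
  so any successor of y is terminal.\<close>
lemma exists_terminal_successor:
  assumes "x \<in> U"
  shows "\<exists>z\<in>terminal. (x, z) \<in> R"
proof -
  let ?N = "\<lambda>y. R `` {y}"
  have finite_N: "finite (?N y)" for y
    using finite_U R_sub finite_subset by fastforce
  obtain y0 where "(x, y0) \<in> R"
    using serial assms unfolding serial_on_def by blast
  then obtain y where xy: "(x, y) \<in> R"
    and minimal: "\<forall>v. (x, v) \<in> R \<longrightarrow> card (?N y) \<le> card (?N v)"
    using ex_has_least_nat[of "\<lambda>v. (x, v) \<in> R" y0 "\<lambda>v. card (?N v)"] by blast
  have stable: "?N v = ?N y" if "(y, v) \<in> R" for v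
  proof -
    have "?N v \<subseteq> ?N y" using that R_trans by blast
    moreover have "card (?N y) \<le> card (?N v)" using minimal R_trans[OF xy that] by blast
    ultimately show ?thesis using finite_N by (metis card_seteq)
  qed
  obtain w where yw: "(y, w) \<in> R"
    using serial xy R_sub unfolding serial_on_def by blast
  have "w \<in> terminal" unfolding terminal_def
  proof (intro CollectI conjI allI impI)
    show "w \<in> U" using yw R_sub by blast
    fix v assume "(w, v) \<in> R"
    then have "?N v = ?N y" using stable R_trans yw by blast
    then show "(v, w) \<in> R" using yw by blast
  qed
  moreover have "(x, w) \<in> R" using R_trans xy yw by blast
  ultimately show ?thesis by blast
qed

lemma terminal_refl: "z \<in> terminal \<Longrightarrow> (z, z) \<in> R"
  using serial R_trans unfolding terminal_def serial_on_def by blast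

lemma terminal_succ: "z \<in> terminal \<Longrightarrow> (z, w) \<in> R \<Longrightarrow> w \<in> terminal"
  using R_trans R_sub unfolding terminal_def by blast

lemma reg_of_terminal_iff:
  assumes "terminal_closed A" and "z \<in> terminal"
  shows "z \<in> reg_of A \<longleftrightarrow> z \<in> A"
  using assms terminal_refl unfolding terminal_closed_def reg_of_def terminal_def by blast

lemma regular_eq_reg_of:
  assumes "X \<in> Reg U R"
  shows "X = reg_of X"
proof -
  have "X \<subseteq> U" and "X = lower_approx U R (upper_approx U R X)"
    using assms unfolding Reg_def by auto
  then have mem: "x \<in> X \<longleftrightarrow> x \<in> U \<and> (\<forall>y. (x, y) \<in> R \<longrightarrow> (\<exists>w. (y, w) \<in> R \<and> w \<in> X))" for x
    using mem_lower_upper_iff[OF R_sub] by blast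
  show ?thesis
  proof (intro set_eqI iffI)
    fix x assume x: "x \<in> X"
    show "x \<in> reg_of X" unfolding reg_of_def
    proof (intro CollectI conjI ballI impI)
      show "x \<in> U" using x mem by blast
      fix z assume z: "z \<in> terminal" "(x, z) \<in> R"
      then obtain w where zw: "(z, w) \<in> R" "w \<in> X" using mem x by blast
      text \<open>Every successor of z returns to z and hence reaches w.\<close>
      have "\<exists>w. (y, w) \<in> R \<and> w \<in> X" if "(z, y) \<in> R" for y
        using that z zw R_trans unfolding terminal_def by blast
      then show "z \<in> X" using mem z unfolding terminal_def by blast
    qed
  next
    fix x assume x: "x \<in> reg_of X"
    have "\<exists>w. (y, w) \<in> R \<and> w \<in> X" if xy: "(x, y) \<in> R" for y
    proof -
      obtain z where "z \<in> terminal" "(y, z) \<in> R"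
        using exists_terminal_successor xy R_sub by blast
      then show ?thesis using x R_trans xy unfolding reg_of_def by blast
    qed
    then show "x \<in> X" using mem x unfolding reg_of_def by blast
  qed
qed

lemma reg_of_regular:
  assumes "terminal_closed A"
  shows "reg_of A \<in> Reg U R"
proof -
  have "x \<in> reg_of A \<longleftrightarrow> x \<in> lower_approx U R (upper_approx U R (reg_of A))" for x
  proof
    assume x: "x \<in> reg_of A"
    have "\<exists>w. (y, w) \<in> R \<and> w \<in> reg_of A" if xy: "(x, y) \<in> R" for y
    proof -
      obtain z where z: "z \<in> terminal" "(y, z) \<in> R"
        using exists_terminal_successor xy R_sub by blast
      then have "z \<in> A" using x R_trans xy unfolding reg_of_def by blast
      then show ?thesis using reg_of_terminal_iff[OF assms] z by blast
    qed
    then show "x \<in> lower_approx U R (upper_approx U R (reg_of A))"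
      using x mem_lower_upper_iff[OF R_sub] unfolding reg_of_def by blast
  next
    assume "x \<in> lower_approx U R (upper_approx U R (reg_of A))"
    then have xU: "x \<in> U" and succ: "\<forall>y. (x, y) \<in> R \<longrightarrow> (\<exists>w. (y, w) \<in> R \<and> w \<in> reg_of A)"
      using mem_lower_upper_iff[OF R_sub] by blast+
    show "x \<in> reg_of A" unfolding reg_of_def
    proof (intro CollectI conjI ballI impI)
      show "x \<in> U" by fact
      fix z assume z: "z \<in> terminal" "(x, z) \<in> R"
      then obtain w where zw: "(z, w) \<in> R" "w \<in> reg_of A" using succ by blast
      text \<open>w is a terminal point returning to z, so z is among its terminal successors.\<close>
      have "(w, z) \<in> R" using z zw unfolding terminal_def by blast
      then show "z \<in> A" using zw z unfolding reg_of_def by blast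
    qed
  qed
  moreover have "reg_of A \<subseteq> U" unfolding reg_of_def by blast
  ultimately show ?thesis unfolding Reg_def by blast
qed

lemma regular_terminal_closed:
  assumes "X \<in> Reg U R"
  shows "terminal_closed X"
  using regular_eq_reg_of[OF assms] R_trans terminal_succ
  unfolding terminal_closed_def reg_of_def by blast

lemma regular_subset_by_trace:
  assumes "X \<in> Reg U R" and "Y \<in> Reg U R" and "X \<inter> terminal \<subseteq> Y"
  shows "X \<subseteq> Y"
proof -
  have "reg_of X \<subseteq> reg_of Y" using assms(3) unfolding reg_of_def by blast
  then show ?thesis using regular_eq_reg_of assms(1,2) by blast
qed

lemma regular_Int:
  assumes "X \<in> Reg U R" and "Y \<in> Reg U R"
  shows "X \<inter> Y \<in> Reg U R"
proof -
  have "terminal_closed (X \<inter> Y)"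
    using regular_terminal_closed assms unfolding terminal_closed_def by blast
  moreover have "reg_of (X \<inter> Y) = X \<inter> Y"
    using regular_eq_reg_of[OF assms(1)] regular_eq_reg_of[OF assms(2)]
    unfolding reg_of_def by blast
  ultimately show ?thesis using reg_of_regular by metis
qed

lemma meet_regular:
  assumes "X \<in> Reg U R" and "Y \<in> Reg U R"
  shows "is_meet_in (Reg U R) X Y (X \<inter> Y)"
  using regular_Int[OF assms] unfolding is_meet_in_def by blast

lemma join_regular:
  assumes X: "X \<in> Reg U R" and Y: "Y \<in> Reg U R"
  shows "is_join_in (Reg U R) X Y (reg_of (X \<union> Y))"
    and "reg_of (X \<union> Y) \<inter> terminal = (X \<union> Y) \<inter> terminal"
proof -
  have closed: "terminal_closed (X \<union> Y)"
    using regular_terminal_closed assms unfolding terminal_closed_def by blast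
  show trace: "reg_of (X \<union> Y) \<inter> terminal = (X \<union> Y) \<inter> terminal"
    using reg_of_terminal_iff[OF closed] by blast
  have J: "reg_of (X \<union> Y) \<in> Reg U R" using reg_of_regular[OF closed] .
  have "X \<subseteq> reg_of (X \<union> Y)" "Y \<subseteq> reg_of (X \<union> Y)"
    using regular_eq_reg_of[OF X] regular_eq_reg_of[OF Y] unfolding reg_of_def by blast+
  moreover have "reg_of (X \<union> Y) \<subseteq> Z" if "Z \<in> Reg U R" "X \<subseteq> Z" "Y \<subseteq> Z" for Z
    using regular_subset_by_trace[OF J that(1)] trace that(2,3) by blast
  ultimately show "is_join_in (Reg U R) X Y (reg_of (X \<union> Y))"
    using J unfolding is_join_in_def by blast
qed

text \<open>An intermediate
  regular set C would meet Y either in X \<inter> Y, forcing C \<subseteq> X, or in Y, forcing the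
  join below C; both comparisons go through traces.\<close>
lemma semimodular:
  assumes X: "X \<in> Reg U R" and Y: "Y \<in> Reg U R"
    and cover: "covers_in (Reg U R) (X \<inter> Y) Y"
  shows "covers_in (Reg U R) X (reg_of (X \<union> Y))"
proof -
  let ?J = "reg_of (X \<union> Y)"
  have J: "?J \<in> Reg U R" "X \<subseteq> ?J"
    using join_regular(1)[OF X Y] unfolding is_join_in_def by blast+
  have trace: "?J \<inter> terminal = (X \<union> Y) \<inter> terminal" using join_regular(2)[OF X Y] .
  have "\<not> Y \<subseteq> X \<inter> Y" using cover unfolding covers_in_def by blast
  then have "\<not> Y \<inter> terminal \<subseteq> X" using regular_subset_by_trace[OF Y regular_Int[OF X Y]] by blast
  then have "X \<noteq> ?J" using trace by blast
  moreover have "\<not> (X \<subset> C \<and> C \<subset> ?J)" if C: "C \<in> Reg U R" for C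
  proof
    assume between: "X \<subset> C \<and> C \<subset> ?J"
    have "X \<inter> Y \<subseteq> C \<inter> Y" "C \<inter> Y \<subseteq> Y" using between by blast+
    then have "C \<inter> Y = X \<inter> Y \<or> C \<inter> Y = Y"
      using cover regular_Int[OF C Y] unfolding covers_in_def by blast
    then show False
    proof
      assume "C \<inter> Y = X \<inter> Y"
      then have "C \<inter> terminal \<subseteq> X" using between trace by blast
      then show False using regular_subset_by_trace[OF C X] between by blast
    next
      assume "C \<inter> Y = Y"
      then have "?J \<inter> terminal \<subseteq> C" using between trace by blast
      then show False using regular_subset_by_trace[OF J(1) C] between by blast
    qed
  qed
  ultimately show ?thesis using X J unfolding covers_in_def by blast
qed

end

theorem proposition1:
  fixes U :: "'a set" and R :: "('a \<times> 'a) set"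
  assumes "finite U" and "U \<noteq> {}" and "R \<subseteq> U \<times> U"
    and "serial_on U R" and "trans R"
  shows "(\<forall>X\<in>Reg U R. \<forall>Y\<in>Reg U R.
            (\<exists>m. is_meet_in (Reg U R) X Y m) \<and> (\<exists>j. is_join_in (Reg U R) X Y j))
       \<and> (\<forall>X\<in>Reg U R. \<forall>Y\<in>Reg U R. \<forall>m j.
            is_meet_in (Reg U R) X Y m \<longrightarrow> is_join_in (Reg U R) X Y j \<longrightarrow>
            covers_in (Reg U R) m Y \<longrightarrow> covers_in (Reg U R) X j)"
proof -
  interpret serial_transitive U R
    using assms by unfold_locales auto
  show ?thesis
  proof (intro conjI ballI allI impI)
    fix X Y assume "X \<in> Reg U R" "Y \<in> Reg U R"
    then show "\<exists>m. is_meet_in (Reg U R) X Y m" "\<exists>j. is_join_in (Reg U R) X Y j"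
      using meet_regular join_regular(1) by blast+
  next
    fix X Y m j assume XY: "X \<in> Reg U R" "Y \<in> Reg U R"
      and "is_meet_in (Reg U R) X Y m" "is_join_in (Reg U R) X Y j"
      and "covers_in (Reg U R) m Y"
    moreover have "m = X \<inter> Y" "j = reg_of (X \<union> Y)"
      using calculation is_meet_in_unique meet_regular[OF XY]
        is_join_in_unique join_regular(1)[OF XY] by blast+
    ultimately show "covers_in (Reg U R) X j" using semimodular by blast
  qed
qed

end
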